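(* Let $F\leq F'\leq\hat F$ be permutation groups on $\Omega$. The following are equivalent: (i) $F=F'$; (ii) $G(F,F')=U(F)$; (iii) $G(F,F')$ is a closed subgroup of $\mathrm{Aut}(\mathcal{T}_d)$; (iv) the vertex stabilizers $G(F,F')_v$ ($v\in V$) are compact in $G(F,F')$.
   Context: Standing notation. $\Omega$ is a finite set with $d=|\Omega|\geq 3$, $\mathcal{T}_d$ is the $d$-regular tree with vertex set $V$ and set $E$ of non-oriented edges, and $\mathrm{Aut}(\mathcal{T}_d)$ carries the permutation topology. Fix a coloring $c:E\to\Omega$ such that for every vertex $v$ its restriction $c_v$ to the set $E(v)$ of edges containing $v$ is a bijection onto $\Omega$. For $g\in\mathrm{Aut}(\mathcal{T}_d)$ and $v\in V$, the local permutation is $\sigma(g,v)=c_{gv}\circ g_v\circ c_v^{-1}\in\mathrm{Sym}(\Omega)$, where $g_v:E(v)\to E(gv)$ is induced by $g$. For $F\leq\mathrm{Sym}(\Omega)$: $U(F)=\{g:\sigma(g,v)\in F \ \forall v\}$; $G(F)=\{g:\sigma(g,v)\in F \text{ for all but finitely many } v\}$; $\hat F$ is the subgroup of permutations preserving each $F$-orbit. For $F\leq F'\leq\hat F$, $G(F,F')=G(F)\cap U(F')$, endowed with the unique group topology for which the inclusion $U(F)\hookrightarrow G(F,F')$ is continuous and open ($U(F)$ with the topology induced from $\mathrm{Aut}(\mathcal{T}_d)$). *)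

theory Defs
  imports "HOL-Analysis.Analysis" "HOL-Combinatorics.Permutations"
begin

text \<open>The vertex set V is the whole type 'v; adjacency is a relation adj.
  Non-oriented edges are the two-element sets {u,w} with adj u w.\<close>

definition edges_at :: "('v \<Rightarrow> 'v \<Rightarrow> bool) \<Rightarrow> 'v \<Rightarrow> 'v set set" where
  "edges_at adj v = {{v, w} | w. adj v w}"

definition is_cycle :: "('v \<Rightarrow> 'v \<Rightarrow> bool) \<Rightarrow> 'v list \<Rightarrow> bool" where
  "is_cycle adj xs \<longleftrightarrow> length xs \<ge> 3 \<and> distinct xs
     \<and> (\<forall>i. Suc i < length xs \<longrightarrow> adj (xs ! i) (xs ! Suc i))
     \<and> adj (last xs) (hd xs)"

definition regular_tree :: "('v \<Rightarrow> 'v \<Rightarrow> bool) \<Rightarrow> nat \<Rightarrow> bool" where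
  "regular_tree adj d \<longleftrightarrow>
     (\<forall>u w. adj u w \<longrightarrow> adj w u) \<and> (\<forall>u. \<not> adj u u)
     \<and> (\<forall>u w. adj\<^sup>*\<^sup>* u w)
     \<and> (\<nexists>xs. is_cycle adj xs)
     \<and> (\<forall>v. finite {w. adj v w} \<and> card {w. adj v w} = d)"

definition legal_coloring :: "('v \<Rightarrow> 'v \<Rightarrow> bool) \<Rightarrow> 'c set \<Rightarrow> ('v set \<Rightarrow> 'c) \<Rightarrow> bool" where
  "legal_coloring adj \<Omega> c \<longleftrightarrow> (\<forall>v. bij_betw c (edges_at adj v) \<Omega>)"

definition Aut :: "('v \<Rightarrow> 'v \<Rightarrow> bool) \<Rightarrow> ('v \<Rightarrow> 'v) set" where
  "Aut adj = {g. bij g \<and> (\<forall>x y. adj x y \<longleftrightarrow> adj (g x) (g y))}"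

text \<open>Permutation topology = topology of pointwise convergence (V discrete).\<close>
definition aut_top :: "('v \<Rightarrow> 'v \<Rightarrow> bool) \<Rightarrow> ('v \<Rightarrow> 'v) topology" where
  "aut_top adj = subtopology (product_topology (\<lambda>_. discrete_topology UNIV) UNIV) (Aut adj)"

text \<open>sigma(g,v) = c_{gv} o g_v o c_v^{-1}, as a permutation of \<Omega> (identity off \<Omega>).
  c_v^{-1}(\<omega>) is the edge {v,w} at v of colour \<omega>; g_v maps it to {g v, g w}.\<close>
definition local_perm ::
  "('v \<Rightarrow> 'v \<Rightarrow> bool) \<Rightarrow> 'c set \<Rightarrow> ('v set \<Rightarrow> 'c) \<Rightarrow> ('v \<Rightarrow> 'v) \<Rightarrow> 'v \<Rightarrow> 'c \<Rightarrow> 'c" where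
  "local_perm adj \<Omega> c g v = (\<lambda>\<omega>. if \<omega> \<in> \<Omega>
      then c (g ` (the_inv_into (edges_at adj v) c \<omega>)) else \<omega>)"

definition perm_group :: "'c set \<Rightarrow> ('c \<Rightarrow> 'c) set \<Rightarrow> bool" where
  "perm_group \<Omega> F \<longleftrightarrow> F \<subseteq> {p. p permutes \<Omega>} \<and> id \<in> F
     \<and> (\<forall>p\<in>F. \<forall>q\<in>F. p \<circ> q \<in> F) \<and> (\<forall>p\<in>F. inv p \<in> F)"

definition hat :: "'c set \<Rightarrow> ('c \<Rightarrow> 'c) set \<Rightarrow> ('c \<Rightarrow> 'c) set" where
  "hat \<Omega> F = {p. p permutes \<Omega> \<and> (\<forall>\<omega>\<in>\<Omega>. p \<omega> \<in> {f \<omega> | f. f \<in> F})}"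

definition U_grp ::
  "('v \<Rightarrow> 'v \<Rightarrow> bool) \<Rightarrow> 'c set \<Rightarrow> ('v set \<Rightarrow> 'c) \<Rightarrow> ('c \<Rightarrow> 'c) set \<Rightarrow> ('v \<Rightarrow> 'v) set" where
  "U_grp adj \<Omega> c F = {g \<in> Aut adj. \<forall>v. local_perm adj \<Omega> c g v \<in> F}"

definition G_grp ::
  "('v \<Rightarrow> 'v \<Rightarrow> bool) \<Rightarrow> 'c set \<Rightarrow> ('v set \<Rightarrow> 'c) \<Rightarrow> ('c \<Rightarrow> 'c) set \<Rightarrow> ('v \<Rightarrow> 'v) set" where
  "G_grp adj \<Omega> c F = {g \<in> Aut adj. finite {v. local_perm adj \<Omega> c g v \<notin> F}}"

definition G2_grp ::
  "('v \<Rightarrow> 'v \<Rightarrow> bool) \<Rightarrow> 'c set \<Rightarrow> ('v set \<Rightarrow> 'c) \<Rightarrow> ('c \<Rightarrow> 'c) set \<Rightarrow> ('c \<Rightarrow> 'c) set \<Rightarrow> ('v \<Rightarrow> 'v) set" where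
  "G2_grp adj \<Omega> c F F' = G_grp adj \<Omega> c F \<inter> U_grp adj \<Omega> c F'"

text \<open>The group topology on G(F,F') for which U(F) (with the topology induced from
  Aut(T_d)) is an open subgroup carrying its own topology: W is open iff W \<subseteq> G(F,F')
  and for every g in G(F,F') the set {u \<in> U(F). g u \<in> W} is open in U(F).\<close>
definition G2_top ::
  "('v \<Rightarrow> 'v \<Rightarrow> bool) \<Rightarrow> 'c set \<Rightarrow> ('v set \<Rightarrow> 'c) \<Rightarrow> ('c \<Rightarrow> 'c) set \<Rightarrow> ('c \<Rightarrow> 'c) set \<Rightarrow> ('v \<Rightarrow> 'v) topology" where
  "G2_top adj \<Omega> c F F' = topology (\<lambda>W. W \<subseteq> G2_grp adj \<Omega> c F F'
      \<and> (\<forall>g \<in> G2_grp adj \<Omega> c F F'.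
           openin (subtopology (aut_top adj) (U_grp adj \<Omega> c F)) {u \<in> U_grp adj \<Omega> c F. g \<circ> u \<in> W}))"

end

theory Submission
  imports Defs
begin

text \<open>If \<open>F = F'\<close> then \<open>G(F, F') = U(F)\<close>, which is closed in \<open>Aut(T_d)\<close> (the local conditions are
  finitely determined and limits of automorphisms are automorphisms) and has compact vertex
  stabilizers (they lie in a product of finite balls). If \<open>\<tau> \<in> F' - F\<close>, one builds automorphisms
  outwards from a root \<open>r\<close>, choosing at each vertex a local permutation in \<open>F' - F\<close> or in \<open>F\<close> at will;
  this is possible because \<open>F' \<le> \<hat>F\<close>. Taking the singular set to be a large ball around \<open>r\<close> gives
  elements of \<open>G(F, F')\<close> converging to one singular everywhere, so \<open>G(F, F')\<close> is not closed; taking it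
  to be a single far-away vertex shows that the stabilizer of \<open>r\<close> is not covered by finitely many of
  the open subgroups whose elements are singular only near \<open>r\<close>.\<close>

lemma successively_upt_iff:
  "successively R [a..<b] \<longleftrightarrow> (\<forall>i. a \<le> i \<longrightarrow> Suc i < b \<longrightarrow> R i (Suc i))"
  unfolding successively_conv_nth
  by (auto simp: nth_upt) (metis add.commute add_Suc_right le_Suc_ex less_diff_conv)

lemma is_cycle_iff:
  "is_cycle adj xs \<longleftrightarrow> 3 \<le> length xs \<and> distinct xs \<and> successively adj xs \<and> adj (last xs) (hd xs)"
  unfolding is_cycle_def successively_conv_nth by blast

locale colored_tree =
  fixes adj :: "'v \<Rightarrow> 'v \<Rightarrow> bool" and \<Omega> :: "'c set" and c :: "'v set \<Rightarrow> 'c"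
  assumes finite_colors: "finite \<Omega>" and three_le_card: "card \<Omega> \<ge> 3"
    and tree: "regular_tree adj (card \<Omega>)" and coloring: "legal_coloring adj \<Omega> c"
begin

lemma adj_sym: "adj u w \<Longrightarrow> adj w u"
  and not_adj_refl: "\<not> adj u u"
  and connected: "adj\<^sup>*\<^sup>* u w"
  and no_cycle: "\<not> is_cycle adj xs"
  and finite_nbrs: "finite {w. adj v w}"
  and card_nbrs: "card {w. adj v w} = card \<Omega>"
  using tree unfolding regular_tree_def by blast+

definition color :: "'v \<Rightarrow> 'v \<Rightarrow> 'c" where
  "color x y = c {x, y}"

lemma color_commute: "color x y = color y x"
  unfolding color_def by (simp add: insert_commute)

lemma bij_betw_color: "bij_betw (color x) {y. adj x y} \<Omega>"
proof -
  have "inj_on (\<lambda>y. {x, y}) {y. adj x y}"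
    using not_adj_refl by (intro inj_onI) (metis doubleton_eq_iff mem_Collect_eq)
  then have "bij_betw (\<lambda>y. {x, y}) {y. adj x y} (edges_at adj x)"
    unfolding bij_betw_def edges_at_def by auto
  moreover have "bij_betw c (edges_at adj x) \<Omega>"
    using coloring unfolding legal_coloring_def by blast
  ultimately show ?thesis
    unfolding color_def by (rule bij_betw_trans[unfolded o_def])
qed

definition nbr :: "'v \<Rightarrow> 'c \<Rightarrow> 'v" where
  "nbr x \<omega> = the_inv_into {y. adj x y} (color x) \<omega>"

lemma adj_nbr: "\<omega> \<in> \<Omega> \<Longrightarrow> adj x (nbr x \<omega>)"
  unfolding nbr_def using bij_betw_color[of x]
  by (metis bij_betw_def mem_Collect_eq the_inv_into_into subset_refl)

lemma color_nbr: "\<omega> \<in> \<Omega> \<Longrightarrow> color x (nbr x \<omega>) = \<omega>"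
  unfolding nbr_def using bij_betw_color[of x] by (metis bij_betw_def f_the_inv_into_f)

lemma nbr_color: "adj x y \<Longrightarrow> nbr x (color x y) = y"
  unfolding nbr_def using bij_betw_color[of x]
  by (metis bij_betw_def mem_Collect_eq the_inv_into_f_f)

lemma color_in: "adj x y \<Longrightarrow> color x y \<in> \<Omega>"
  using bij_betw_color[of x] by (metis bij_betwE mem_Collect_eq)

lemma local_perm_apply:
  assumes "\<omega> \<in> \<Omega>"
  shows "local_perm adj \<Omega> c g x \<omega> = color (g x) (g (nbr x \<omega>))"
proof -
  have "{x, nbr x \<omega>} \<in> edges_at adj x" "c {x, nbr x \<omega>} = \<omega>"
    using adj_nbr[OF assms] color_nbr[OF assms] unfolding edges_at_def color_def by auto
  moreover have "bij_betw c (edges_at adj x) \<Omega>"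
    using coloring unfolding legal_coloring_def by blast
  ultimately have "the_inv_into (edges_at adj x) c \<omega> = {x, nbr x \<omega>}"
    by (metis bij_betw_def the_inv_into_f_f)
  then show ?thesis using assms unfolding local_perm_def color_def by simp
qed

lemma local_perm_outside: "\<omega> \<notin> \<Omega> \<Longrightarrow> local_perm adj \<Omega> c g x \<omega> = \<omega>"
  unfolding local_perm_def by simp

subsection \<open>Distance, geodesics and parents\<close>

definition tdist :: "'v \<Rightarrow> 'v \<Rightarrow> nat" where
  "tdist r x = (LEAST n. (adj ^^ n) r x)"

lemma relpowp_tdist: "(adj ^^ tdist r x) r x"
proof -
  have "\<exists>n. (adj ^^ n) r x" using connected[of r x] by (simp add: rtranclp_power)
  then show ?thesis unfolding tdist_def by (rule LeastI_ex)
qed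

lemma tdist_le: "(adj ^^ n) r x \<Longrightarrow> tdist r x \<le> n"
  unfolding tdist_def by (rule Least_le)

lemma tdist_self [simp]: "tdist r r = 0"
  using tdist_le[of 0 r r] by simp

lemma tdist_eq_0D: "tdist r x = 0 \<Longrightarrow> x = r"
  using relpowp_tdist[of r x] by simp

lemma tdist_adj_le: "adj x y \<Longrightarrow> tdist r y \<le> Suc (tdist r x)"
  using relpowp_tdist[of r x] by (meson tdist_le relpowp_Suc_I)

definition geodesic :: "'v \<Rightarrow> (nat \<Rightarrow> 'v) \<Rightarrow> nat \<Rightarrow> bool" where
  "geodesic r P m \<longleftrightarrow> (\<forall>i<m. adj (P i) (P (Suc i))) \<and> (\<forall>i\<le>m. tdist r (P i) = i)"

lemma geodesic_to:
  obtains P where "geodesic r P (tdist r x)" "P (tdist r x) = x"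
proof -
  obtain P where P: "P 0 = r" "P (tdist r x) = x" "\<forall>i<tdist r x. adj (P i) (P (Suc i))"
    using relpowp_tdist[of r x] unfolding relpowp_fun_conv by blast
  have upper: "tdist r (P i) \<le> i" if "i \<le> tdist r x" for i
    using P that by (intro tdist_le) (auto simp: relpowp_fun_conv intro!: exI[of _ P])
  have step: "tdist r (P (i + j)) \<le> tdist r (P i) + j" if "i + j \<le> tdist r x" for i j
    using that
  proof (induction j)
    case (Suc j)
    then have "tdist r (P (Suc (i + j))) \<le> Suc (tdist r (P (i + j)))"
      using P(3) by (intro tdist_adj_le) simp
    then show ?case using Suc by simp
  qed simp
  have "tdist r (P i) = i" if "i \<le> tdist r x" for i
    using step[of i "tdist r x - i"] upper[OF that] that P(2) by simp
  then show ?thesis using that P unfolding geodesic_def by blast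
qed

lemma geodesics_last_common_vertex:
  assumes P: "geodesic r P m" and Q: "geodesic r Q m" and ends: "P m \<noteq> Q m"
  obtains k where "k < m" "P k = Q k" "\<And>i. k < i \<Longrightarrow> i \<le> m \<Longrightarrow> P i \<noteq> Q i"
proof -
  define K where "K = {i. i \<le> m \<and> P i = Q i}"
  have "P 0 = r" "Q 0 = r" using P Q tdist_eq_0D unfolding geodesic_def by auto
  then have "0 \<in> K" unfolding K_def by simp
  moreover have "finite K" unfolding K_def by simp
  ultimately have "Max K \<in> K" and after: "\<And>i. Max K < i \<Longrightarrow> i \<le> m \<Longrightarrow> P i \<noteq> Q i"
    by (auto intro: Max_in) (use K_def Max_ge leD in blast)
  moreover have "Max K < m" using \<open>Max K \<in> K\<close> ends unfolding K_def by (auto simp: le_less)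
  ultimately show ?thesis using that unfolding K_def by blast
qed

lemma successively_geodesics_bridge:
  assumes P: "geodesic r P m" and Q: "geodesic r Q m" and "k < m"
    and bridge: "successively adj (P m # mid @ [Q m])"
  shows "successively adj (map P [k..<Suc m] @ mid @ rev (map Q [Suc k..<Suc m]))"
proof -
  have sP: "\<And>i. i < m \<Longrightarrow> adj (P i) (P (Suc i))" and sQ: "\<And>i. i < m \<Longrightarrow> adj (Q i) (Q (Suc i))"
    using P Q unfolding geodesic_def by auto
  have Ppart: "successively adj (map P [k..<m])"
    and Qpart: "successively adj (rev (map Q [Suc k..<m]))"
    using sP sQ adj_sym by (auto simp: successively_map successively_upt_iff)
  have tail: "successively adj ((P m # mid @ [Q m]) @ rev (map Q [Suc k..<m]))"
  proof (cases "Suc k < m")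
    case True
    then have "adj (Q m) (Q (m - 1))" using sQ[of "m - 1"] adj_sym by simp
    then show ?thesis using True bridge Qpart
      unfolding successively_append_iff by (simp add: hd_rev last_map)
  qed (use bridge in simp)
  have "adj (P (m - 1)) (P m)" using sP[of "m - 1"] \<open>k < m\<close> by simp
  then have "successively adj (map P [k..<m] @ (P m # mid @ [Q m]) @ rev (map Q [Suc k..<m]))"
    using \<open>k < m\<close> Ppart tail unfolding successively_append_iff[of _ "map P [k..<m]"]
    by (simp add: last_map)
  moreover have "map P [k..<Suc m] @ mid @ rev (map Q [Suc k..<Suc m])
      = map P [k..<m] @ (P m # mid @ [Q m]) @ rev (map Q [Suc k..<m])"
    using \<open>k < m\<close> by simp
  ultimately show ?thesis by simp
qed

text \<open>The two geodesics, from their last common vertex on, together with the bridge close up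
  to a cycle: the vertices on it are told apart by their distance from \<open>r\<close>.\<close>
lemma geodesics_not_bridged:
  assumes P: "geodesic r P m" and Q: "geodesic r Q m" and ends: "P m \<noteq> Q m"
    and bridge: "distinct mid" "\<forall>x\<in>set mid. m < tdist r x" "successively adj (P m # mid @ [Q m])"
  shows False
proof -
  have dP: "\<And>i. i \<le> m \<Longrightarrow> tdist r (P i) = i" and dQ: "\<And>i. i \<le> m \<Longrightarrow> tdist r (Q i) = i"
    using P Q unfolding geodesic_def by auto
  obtain k where k: "k < m" "P k = Q k" and after_k: "\<And>i. k < i \<Longrightarrow> i \<le> m \<Longrightarrow> P i \<noteq> Q i"
    using geodesics_last_common_vertex[OF P Q ends] by blast
  define A where "A = map P [k..<Suc m]"
  define B where "B = rev (map Q [Suc k..<Suc m])"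
  have "inj_on P {..m}" "inj_on Q {..m}"
    using dP dQ by (auto intro!: inj_on_inverseI[where g = "tdist r"])
  then have "distinct A" "distinct B"
    unfolding A_def B_def distinct_rev distinct_map by (auto elim: inj_on_subset)
  moreover have "set A \<inter> set mid = {}" "set B \<inter> set mid = {}"
  proof -
    have "\<forall>x\<in>set A \<union> set B. tdist r x \<le> m" unfolding A_def B_def using dP dQ by auto
    then show "set A \<inter> set mid = {}" "set B \<inter> set mid = {}"
      using bridge(2) by (meson disjoint_iff not_le UnCI)+
  qed
  moreover have "set A \<inter> set B = {}"
  proof -
    have "P i \<noteq> Q j" if "i \<le> m" "k < j" "j \<le> m" for i j
      using dP[OF that(1)] dQ[OF that(3)] after_k[OF that(2,3)] by metis
    then show ?thesis unfolding A_def B_def by fastforce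
  qed
  ultimately have "distinct (A @ mid @ B)" using bridge(1) by auto
  moreover have "successively adj (A @ mid @ B)"
    unfolding A_def B_def by (rule successively_geodesics_bridge[OF P Q k(1) bridge(3)])
  moreover have "adj (last (A @ mid @ B)) (hd (A @ mid @ B))"
  proof -
    have "last (A @ mid @ B) = Q (Suc k)" "hd (A @ mid @ B) = P k"
      unfolding A_def B_def using k by (simp_all add: last_rev hd_map del: upt_Suc)
    then show ?thesis using Q k adj_sym unfolding geodesic_def by simp
  qed
  moreover have "3 \<le> length (A @ mid @ B)"
    unfolding A_def B_def using k by simp
  ultimately show False using no_cycle is_cycle_iff by blast
qed

lemma adj_tdist: "adj x y \<Longrightarrow> tdist r y = Suc (tdist r x) \<or> tdist r x = Suc (tdist r y)"
proof -
  assume xy: "adj x y"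
  have "tdist r x \<noteq> tdist r y"
  proof
    assume eq: "tdist r x = tdist r y"
    obtain P where P: "geodesic r P (tdist r x)" "P (tdist r x) = x" by (rule geodesic_to)
    obtain Q where Q: "geodesic r Q (tdist r x)" "Q (tdist r x) = y" by (rule geodesic_to[of r y]) (use eq in simp)
    have "x \<noteq> y" "successively adj [x, y]" using xy not_adj_refl by auto
    then show False using geodesics_not_bridged[OF P(1) Q(1), of "[]"] P(2) Q(2) by simp
  qed
  then show ?thesis using tdist_adj_le[OF xy, of r] tdist_adj_le[OF adj_sym[OF xy], of r] by linarith
qed

lemma parent_unique:
  assumes "adj x p" "adj x q" "tdist r x = Suc (tdist r p)" "tdist r x = Suc (tdist r q)"
  shows "p = q"
proof (rule ccontr)
  assume "p \<noteq> q"
  obtain P where P: "geodesic r P (tdist r p)" "P (tdist r p) = p" by (rule geodesic_to)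
  obtain Q where Q: "geodesic r Q (tdist r p)" "Q (tdist r p) = q"
    by (rule geodesic_to[of r q]) (use assms in simp)
  have "successively adj [p, x, q]" using assms adj_sym by simp
  then show False
    using geodesics_not_bridged[OF P(1) Q(1), of "[x]"] P(2) Q(2) \<open>p \<noteq> q\<close> assms(3) by simp
qed

definition parent :: "'v \<Rightarrow> 'v \<Rightarrow> 'v" where
  "parent r x = (THE p. adj x p \<and> tdist r x = Suc (tdist r p))"

lemma parent:
  assumes "x \<noteq> r"
  shows "adj x (parent r x)" "tdist r x = Suc (tdist r (parent r x))"
proof -
  obtain n where n: "tdist r x = Suc n"
    using assms tdist_eq_0D by (cases "tdist r x") auto
  obtain P where P: "geodesic r P (Suc n)" "P (Suc n) = x"
    by (rule geodesic_to[of r x]) (use n in simp)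
  have "adj (P n) (P (Suc n))" "tdist r (P n) = n"
    using P(1) unfolding geodesic_def by auto
  then have Pn: "adj x (P n) \<and> tdist r x = Suc (tdist r (P n))"
    using P(2) n adj_sym by simp
  then have "adj x (parent r x) \<and> tdist r x = Suc (tdist r (parent r x))"
    unfolding parent_def by (rule theI) (use Pn parent_unique in blast)
  then show "adj x (parent r x)" "tdist r x = Suc (tdist r (parent r x))" by auto
qed

lemma parent_eq: "adj x p \<Longrightarrow> tdist r x = Suc (tdist r p) \<Longrightarrow> parent r x = p"
  unfolding parent_def using parent_unique by blast

lemma adj_parent_cases:
  "adj x y \<Longrightarrow> (x \<noteq> r \<and> y = parent r x) \<or> (y \<noteq> r \<and> x = parent r y)"
proof -
  assume xy: "adj x y"
  from adj_tdist[OF xy, of r] show ?thesis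
  proof
    assume "tdist r y = Suc (tdist r x)"
    then have "y \<noteq> r" "x = parent r y" using parent_eq[OF adj_sym[OF xy]] by auto
    then show ?thesis by blast
  next
    assume "tdist r x = Suc (tdist r y)"
    then have "x \<noteq> r" "y = parent r x" using parent_eq[OF xy] by auto
    then show ?thesis by blast
  qed
qed

lemma parent_induct [case_names root step]:
  assumes "P r" "\<And>x. x \<noteq> r \<Longrightarrow> P (parent r x) \<Longrightarrow> P x"
  shows "P x"
proof (induction "tdist r x" arbitrary: x)
  case 0
  then have "x = r" by (simp add: tdist_eq_0D)
  then show ?case using assms(1) by simp
next
  case (Suc n)
  have x: "x \<noteq> r" using Suc(2) by (metis tdist_self nat.distinct(1))
  then have "n = tdist r (parent r x)" using Suc(2) parent(2)[OF x] by linarith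
  then have "P (parent r x)" by (rule Suc(1))
  then show ?case by (rule assms(2)[OF x])
qed

text \<open>Equal finite neighborhood sizes force such a map to send each neighborhood onto a
  neighborhood; connectedness then gives surjectivity.\<close>
lemma surj_if_inj_adj_iff:
  assumes inj: "inj f" and adj_iff: "\<And>x y. adj x y \<longleftrightarrow> adj (f x) (f y)"
  shows "surj f"
proof -
  have nbrs: "f ` {w. adj x w} = {w. adj (f x) w}" for x
  proof (rule card_subset_eq)
    show "f ` {w. adj x w} \<subseteq> {w. adj (f x) w}" using adj_iff by auto
    have "card (f ` {w. adj x w}) = card {w. adj x w}"
      using inj by (simp add: card_image inj_on_subset)
    then show "card (f ` {w. adj x w}) = card {w. adj (f x) w}" using card_nbrs by simp
  qed (rule finite_nbrs)
  have "y \<in> range f" for y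
    using connected[of "f undefined" y]
  proof (induction rule: rtranclp_induct)
    case (step y z)
    then obtain x where "y = f x" by blast
    then show ?case using nbrs[of x] step(2) by blast
  qed simp
  then show ?thesis by blast
qed

subsection \<open>Automorphisms with prescribed local permutations\<close>

text \<open>An automorphism \<open>g\<close> fixing \<open>r\<close> is built outwards from \<open>r\<close>: once \<open>g\<close> and \<open>\<sigma>(g, -)\<close> are known at
  the parent \<open>p\<close> of \<open>x\<close>, the edge color \<open>\<omega>\<close> of \<open>{x, p}\<close> determines \<open>g x\<close> as the neighbor of
  \<open>g p\<close> of color \<open>a = \<sigma>(g, p) \<omega>\<close>, and \<open>\<sigma>(g, x)\<close> may be any permutation \<open>ch x \<omega> a\<close> sending
  \<open>\<omega>\<close> to \<open>a\<close>. The recursion is on a fuel parameter, instantiated by the distance from \<open>r\<close>.\<close>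
fun extension ::
  "'v \<Rightarrow> ('c \<Rightarrow> 'c) \<Rightarrow> ('v \<Rightarrow> 'c \<Rightarrow> 'c \<Rightarrow> 'c \<Rightarrow> 'c) \<Rightarrow> nat \<Rightarrow> 'v \<Rightarrow> 'v \<times> ('c \<Rightarrow> 'c)"
where
  "extension r s0 ch 0 x = (r, s0)"
| "extension r s0 ch (Suc n) x =
     (nbr (fst (extension r s0 ch n (parent r x)))
        (snd (extension r s0 ch n (parent r x)) (color x (parent r x))),
      ch x (color x (parent r x)) (snd (extension r s0 ch n (parent r x)) (color x (parent r x))))"

definition ext_map :: "'v \<Rightarrow> ('c \<Rightarrow> 'c) \<Rightarrow> ('v \<Rightarrow> 'c \<Rightarrow> 'c \<Rightarrow> 'c \<Rightarrow> 'c) \<Rightarrow> 'v \<Rightarrow> 'v" where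
  "ext_map r s0 ch x = fst (extension r s0 ch (tdist r x) x)"

definition ext_perm :: "'v \<Rightarrow> ('c \<Rightarrow> 'c) \<Rightarrow> ('v \<Rightarrow> 'c \<Rightarrow> 'c \<Rightarrow> 'c \<Rightarrow> 'c) \<Rightarrow> 'v \<Rightarrow> 'c \<Rightarrow> 'c" where
  "ext_perm r s0 ch x = snd (extension r s0 ch (tdist r x) x)"

lemma ext_map_root: "ext_map r s0 ch r = r"
  and ext_perm_root: "ext_perm r s0 ch r = s0"
  unfolding ext_map_def ext_perm_def by simp_all

lemma ext_map_parent:
  "x \<noteq> r \<Longrightarrow> ext_map r s0 ch x =
     nbr (ext_map r s0 ch (parent r x)) (ext_perm r s0 ch (parent r x) (color x (parent r x)))"
  and ext_perm_parent:
  "x \<noteq> r \<Longrightarrow> ext_perm r s0 ch x =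
     ch x (color x (parent r x)) (ext_perm r s0 ch (parent r x) (color x (parent r x)))"
  unfolding ext_map_def ext_perm_def using parent(2)[of x r] by simp_all

lemma ext_eq_if_local_eq:
  assumes "\<And>y. tdist r y \<le> n \<Longrightarrow> ch y = ch' y" and "tdist r x \<le> n"
  shows "ext_map r s0 ch x = ext_map r s0 ch' x \<and> ext_perm r s0 ch x = ext_perm r s0 ch' x"
  using assms(2)
proof (induction x rule: parent_induct[where r=r])
  case (step x)
  then have "tdist r (parent r x) \<le> n" using parent(2)[of x r] by simp
  then have "ext_map r s0 ch (parent r x) = ext_map r s0 ch' (parent r x)"
    "ext_perm r s0 ch (parent r x) = ext_perm r s0 ch' (parent r x)" using step(2) by auto
  moreover have "ch x = ch' x" using assms(1) step(3) by simp
  ultimately show ?case using ext_map_parent[OF step(1)] ext_perm_parent[OF step(1)] by simp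
qed (simp add: ext_map_root ext_perm_root)

definition admissible :: "('c \<Rightarrow> 'c) \<Rightarrow> ('v \<Rightarrow> 'c \<Rightarrow> 'c \<Rightarrow> 'c \<Rightarrow> 'c) \<Rightarrow> bool" where
  "admissible s0 ch \<longleftrightarrow> s0 permutes \<Omega>
     \<and> (\<forall>x \<omega> a. \<omega> \<in> \<Omega> \<longrightarrow> a \<in> \<Omega> \<longrightarrow> ch x \<omega> a permutes \<Omega> \<and> ch x \<omega> a \<omega> = a)"

end

locale admissible_extension = colored_tree adj \<Omega> c
  for adj :: "'v \<Rightarrow> 'v \<Rightarrow> bool" and \<Omega> :: "'c set" and c +
  fixes r :: 'v and s0 :: "'c \<Rightarrow> 'c" and ch :: "'v \<Rightarrow> 'c \<Rightarrow> 'c \<Rightarrow> 'c \<Rightarrow> 'c"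
  assumes admissible: "admissible s0 ch"
begin

abbreviation "g \<equiv> ext_map r s0 ch"
abbreviation "s \<equiv> ext_perm r s0 ch"

lemma ext_perm_permutes: "s x permutes \<Omega>"
proof (induction x rule: parent_induct[where r=r])
  case root
  then show ?case using admissible unfolding admissible_def by (simp add: ext_perm_root)
next
  case (step x)
  let ?\<omega> = "color x (parent r x)"
  have "?\<omega> \<in> \<Omega>" using parent(1)[OF step(1)] color_in by blast
  moreover have "s (parent r x) ?\<omega> \<in> \<Omega>"
    using calculation permutes_in_image[OF step(2)] by blast
  ultimately show ?case
    using admissible ext_perm_parent[OF step(1)] unfolding admissible_def by simp
qed

lemma ext_perm_in: "\<omega> \<in> \<Omega> \<Longrightarrow> s x \<omega> \<in> \<Omega>"
  by (simp only: permutes_in_image[OF ext_perm_permutes])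

lemma ext_map_nbr:
  assumes \<omega>: "\<omega> \<in> \<Omega>"
  shows "g (nbr x \<omega>) = nbr (g x) (s x \<omega>)"
proof -
  let ?y = "nbr x \<omega>"
  from adj_parent_cases[OF adj_nbr[OF \<omega>, of x], where r = r] show ?thesis
  proof
    assume up: "x \<noteq> r \<and> ?y = parent r x"
    then have "color x (parent r x) = \<omega>" using color_nbr[OF \<omega>] by metis
    then have gx: "g x = nbr (g ?y) (s ?y \<omega>)" and "s x = ch x \<omega> (s ?y \<omega>)"
      using ext_map_parent[of x] ext_perm_parent[of x] up by simp_all
    then have sx: "s x \<omega> = s ?y \<omega>"
      using admissible ext_perm_in[OF \<omega>] \<omega> unfolding admissible_def by simp
    have a: "s ?y \<omega> \<in> \<Omega>" by (rule ext_perm_in[OF \<omega>])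
    have "adj (g x) (g ?y)" "color (g x) (g ?y) = s ?y \<omega>"
      using gx adj_sym[OF adj_nbr[OF a]] color_nbr[OF a] color_commute by simp_all
    then have "nbr (g x) (s ?y \<omega>) = g ?y" using nbr_color by metis
    then show ?thesis using sx by simp
  next
    assume down: "?y \<noteq> r \<and> x = parent r ?y"
    have "color ?y x = \<omega>" using color_nbr[OF \<omega>] color_commute by metis
    then show ?thesis using ext_map_parent[of ?y] down by simp
  qed
qed

lemma ext_map_adj_nbr: "adj x y \<Longrightarrow> g y = nbr (g x) (s x (color x y))"
  using ext_map_nbr[OF color_in, of x y x] nbr_color[of x y] by simp

lemma local_perm_ext_map: "local_perm adj \<Omega> c g x = s x"
proof
  fix \<omega>
  show "local_perm adj \<Omega> c g x \<omega> = s x \<omega>"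
  proof (cases "\<omega> \<in> \<Omega>")
    case True
    then show ?thesis by (simp add: local_perm_apply ext_map_nbr color_nbr ext_perm_in)
  next
    case False
    then show ?thesis
      using local_perm_outside permutes_not_in[OF ext_perm_permutes] by simp
  qed
qed

lemma ext_map_adj: "adj x y \<Longrightarrow> adj (g x) (g y)"
  by (simp add: ext_map_adj_nbr adj_nbr ext_perm_in color_in)

lemma ext_map_inj_on_nbrs:
  assumes "adj p y" "adj p z" "g y = g z"
  shows "y = z"
proof -
  have "s p (color p y) = color (g p) (g y)" "s p (color p z) = color (g p) (g z)"
    using assms(1,2) by (simp_all add: ext_map_adj_nbr color_nbr ext_perm_in color_in)
  then have "s p (color p y) = s p (color p z)" using assms(3) by (simp only:)
  then have "color p y = color p z"
    by (rule injD[OF permutes_inj[OF ext_perm_permutes[of p]]])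
  then have "nbr p (color p y) = nbr p (color p z)" by (rule arg_cong)
  then show "y = z" by (simp only: nbr_color[OF assms(1)] nbr_color[OF assms(2)])
qed

lemma tdist_ext_map: "tdist r (g x) = tdist r x \<and> (x \<noteq> r \<longrightarrow> parent r (g x) = g (parent r x))"
proof (induction x rule: parent_induct[where r=r])
  case root
  then show ?case by (simp add: ext_map_root)
next
  case (step x)
  define p where "p = parent r x"
  have xp: "adj x p" "tdist r x = Suc (tdist r p)" using parent[OF step(1)] p_def by auto
  have gp_gx: "adj (g p) (g x)" using ext_map_adj adj_sym xp(1) by blast
  have "tdist r (g x) = Suc (tdist r (g p))"
  proof (rule ccontr)
    assume "tdist r (g x) \<noteq> Suc (tdist r (g p))"
    then have down: "tdist r (g p) = Suc (tdist r (g x))" using adj_tdist[OF gp_gx, of r] by simp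
    then have "p \<noteq> r" using step(2) p_def by auto
    have "g (parent r p) = g x"
      using parent_eq[OF gp_gx down] step(2) \<open>p \<noteq> r\<close> p_def by simp
    then have "parent r p = x"
      using ext_map_inj_on_nbrs parent(1)[OF \<open>p \<noteq> r\<close>] adj_sym[OF xp(1)] by blast
    then show False using parent(2)[OF \<open>p \<noteq> r\<close>] xp(2) by simp
  qed
  then show ?case
    using step(2) xp parent_eq[OF adj_sym[OF gp_gx]] p_def by simp
qed

lemma inj_ext_map: "inj g"
proof -
  have "\<forall>y. g x = g y \<longrightarrow> x = y" for x
  proof (induction x rule: parent_induct[where r=r])
    case root
    show ?case
    proof (intro allI impI)
      fix y assume "g r = g y"
      then have "tdist r y = 0" using tdist_ext_map[of y] by (simp add: ext_map_root)
      then show "r = y" by (simp add: tdist_eq_0D[of r y])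
    qed
  next
    case (step x)
    show ?case
    proof (intro allI impI)
      fix y assume gxy: "g x = g y"
      have "tdist r y = tdist r x" using tdist_ext_map[of x] tdist_ext_map[of y] gxy by simp
      then have "y \<noteq> r" using step(1) tdist_eq_0D[of r x] by auto
      then have "g (parent r x) = g (parent r y)"
        using step(1) tdist_ext_map[of x] tdist_ext_map[of y] gxy by simp
      then have "parent r x = parent r y" using step(2) by blast
      moreover have "adj (parent r x) x" "adj (parent r y) y"
        using parent(1) step(1) \<open>y \<noteq> r\<close> adj_sym by blast+
      ultimately show "x = y" using ext_map_inj_on_nbrs gxy by simp
    qed
  qed
  then show ?thesis by (intro injI) blast
qed

lemma ext_map_adj_iff: "adj x y \<longleftrightarrow> adj (g x) (g y)"
proof
  assume gxy: "adj (g x) (g y)"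
  have "color (g x) (g y) \<in> s x ` \<Omega>"
    using permutes_image[OF ext_perm_permutes[of x]] color_in[OF gxy] by (simp only:)
  then obtain \<omega> where \<omega>: "\<omega> \<in> \<Omega>" "color (g x) (g y) = s x \<omega>" by (rule imageE)
  have "g (nbr x \<omega>) = nbr (g x) (s x \<omega>)" by (rule ext_map_nbr[OF \<omega>(1)])
  also have "\<dots> = g y" unfolding \<omega>(2)[symmetric] by (rule nbr_color[OF gxy])
  finally have "g (nbr x \<omega>) = g y" .
  then have "nbr x \<omega> = y" by (rule injD[OF inj_ext_map])
  then show "adj x y" using adj_nbr[OF \<omega>(1), of x] by simp
qed (rule ext_map_adj)

lemma ext_map_Aut: "g \<in> Aut adj"
  unfolding Aut_def bij_def
  using inj_ext_map surj_if_inj_adj_iff[OF inj_ext_map] ext_map_adj_iff by blast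

end

abbreviation pointwise_topology :: "('a \<Rightarrow> 'b) topology" where
  "pointwise_topology \<equiv> product_topology (\<lambda>_. discrete_topology UNIV) UNIV"

lemma openin_pointwise_if_determined_on_finite:
  assumes "finite A" and determined: "\<And>f f'. \<forall>y\<in>A. f y = f' y \<Longrightarrow> f \<in> X \<Longrightarrow> f' \<in> X"
  shows "openin pointwise_topology X"
  unfolding openin_product_topology_alt
proof (intro ballI)
  fix f assume f: "f \<in> X"
  define V where "V i = (if i \<in> A then {f i} else UNIV)" for i
  have "finite {i \<in> UNIV. V i \<noteq> topspace (discrete_topology UNIV)}"
    by (rule finite_subset[OF _ assms(1)]) (auto simp: V_def)
  moreover have "Pi\<^sub>E UNIV V \<subseteq> X"
  proof
    fix f' assume "f' \<in> Pi\<^sub>E UNIV V"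
    then have "\<forall>i. f' i \<in> V i" by (simp add: PiE_iff)
    then have "\<forall>y\<in>A. f y = f' y" unfolding V_def by (metis singletonD)
    then show "f' \<in> X" using determined f by blast
  qed
  moreover have "f \<in> Pi\<^sub>E UNIV V" unfolding V_def by auto
  ultimately show "\<exists>V. finite {i \<in> UNIV. V i \<noteq> topspace (discrete_topology UNIV)} \<and>
      (\<forall>i\<in>UNIV. openin (discrete_topology UNIV) (V i)) \<and> f \<in> Pi\<^sub>E UNIV V \<and> Pi\<^sub>E UNIV V \<subseteq> X"
    by auto
qed

lemma closedin_pointwise_if_determined_on_finite:
  assumes "finite A" and determined: "\<And>f f'. \<forall>y\<in>A. f y = f' y \<Longrightarrow> f \<in> X \<Longrightarrow> f' \<in> X"
  shows "closedin pointwise_topology X"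
proof -
  have "openin pointwise_topology (- X)"
  proof (rule openin_pointwise_if_determined_on_finite[OF assms(1)])
    fix f f' assume "\<forall>y\<in>A. f y = f' y" "f \<in> - X"
    then show "f' \<in> - X" using determined[of f' f] by auto
  qed
  then show ?thesis unfolding closedin_def by (simp add: Compl_eq_Diff_UNIV)
qed

lemma openin_pointwise_determined_on_finite:
  assumes "openin pointwise_topology X" "f \<in> X"
  obtains A where "finite A" "\<And>f'. \<forall>y\<in>A. f y = f' y \<Longrightarrow> f' \<in> X"
proof -
  obtain V where V: "finite {i \<in> UNIV. V i \<noteq> topspace (discrete_topology UNIV)}"
    "f \<in> Pi\<^sub>E UNIV V" "Pi\<^sub>E UNIV V \<subseteq> X"
    using assms unfolding openin_product_topology_alt by blast
  have "f' \<in> X" if "\<forall>y\<in>{i. V i \<noteq> UNIV}. f y = f' y" for f'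
  proof -
    have "f' i \<in> V i" for i
    proof (cases "V i = UNIV")
      case False
      then have "f' i = f i" using that by simp
      then show ?thesis using V(2) by (simp add: PiE_iff)
    qed simp
    then show ?thesis using V(3) by (auto simp: PiE_iff)
  qed
  moreover have "finite {i. V i \<noteq> UNIV}" using V(1) by simp
  ultimately show ?thesis using that by blast
qed

lemma openin_pointwise_cover_image:
  assumes "finite B"
  shows "openin pointwise_topology {f. S \<subseteq> f ` B}"
  by (rule openin_pointwise_if_determined_on_finite[OF assms]) (auto simp: image_iff)

context colored_tree
begin

lemma finite_tdist_ball: "finite {y. tdist r y \<le> n}"
proof (induction n)
  case 0
  have "{y. tdist r y \<le> 0} = {r}" using tdist_eq_0D by auto
  then show ?case by simp
next
  case (Suc n)
  have "{y. tdist r y \<le> Suc n} \<subseteq> {y. tdist r y \<le> n} \<union> (\<Union>x\<in>{y. tdist r y \<le> n}. {w. adj x w})"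
  proof
    fix y assume y: "y \<in> {y. tdist r y \<le> Suc n}"
    show "y \<in> {y. tdist r y \<le> n} \<union> (\<Union>x\<in>{y. tdist r y \<le> n}. {w. adj x w})"
    proof (cases "tdist r y \<le> n")
      case False
      then have "y \<noteq> r" by auto
      then have "adj (parent r y) y" "tdist r (parent r y) \<le> n"
        using parent[of y r] adj_sym y False by auto
      then show ?thesis by blast
    qed simp
  qed
  moreover have "finite ({y. tdist r y \<le> n} \<union> (\<Union>x\<in>{y. tdist r y \<le> n}. {w. adj x w}))"
    using Suc finite_nbrs by simp
  ultimately show ?case by (rule finite_subset)
qed

lemma ex_tdist_eq: "\<exists>x. tdist r x = n"
proof (induction n)
  case (Suc n)
  then obtain x where x: "tdist r x = n" by blast
  have "card {w. adj x w} - card {parent r x} \<le> card ({w. adj x w} - {parent r x})"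
    by (rule diff_card_le_card_Diff) simp
  then have "card ({w. adj x w} - {parent r x}) > 0" using card_nbrs[of x] three_le_card by simp
  then have "{w. adj x w} - {parent r x} \<noteq> {}" by (metis card.empty less_irrefl)
  then obtain y where y: "adj x y" "y \<noteq> parent r x" by blast
  have "tdist r y = Suc n"
  proof -
    from adj_tdist[OF y(1), of r] show ?thesis
    proof
      assume "tdist r x = Suc (tdist r y)"
      then have "parent r x = y" by (rule parent_eq[OF y(1)])
      then show ?thesis using y(2) by simp
    qed (use x in simp)
  qed
  then show ?case by blast
qed (use tdist_self in blast)

lemma infinite_vertices: "infinite (UNIV :: 'v set)"
proof
  assume "finite (UNIV :: 'v set)"
  then have "finite (range (tdist r))" by simp
  moreover have "range (tdist r) = (UNIV :: nat set)" using ex_tdist_eq by (metis surj_def)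
  ultimately show False by simp
qed

lemma id_in_Aut: "id \<in> Aut adj"
  unfolding Aut_def by simp

lemma comp_in_Aut: "k \<in> Aut adj \<Longrightarrow> h \<in> Aut adj \<Longrightarrow> k \<circ> h \<in> Aut adj"
  unfolding Aut_def by (auto intro: bij_comp)

lemma tdist_Aut_le:
  assumes k: "k \<in> Aut adj" "k r = r"
  shows "tdist r (k x) \<le> tdist r x"
proof -
  have "(adj ^^ n) (k a) (k b)" if "(adj ^^ n) a b" for n a b
    using that
  proof (induction n arbitrary: b)
    case (Suc n)
    then obtain z where "(adj ^^ n) a z" "adj z b" by auto
    then show ?case using Suc k unfolding Aut_def by auto
  qed simp
  then have "(adj ^^ tdist r x) r (k x)" using relpowp_tdist[of r x] k by metis
  then show ?thesis by (rule tdist_le)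
qed

text \<open>Pointwise limits of automorphisms are injective and preserve adjacency in both directions,
  hence are onto by \<open>surj_if_inj_adj_iff\<close>.\<close>
lemma closedin_Aut: "closedin pointwise_topology (Aut adj)"
proof -
  define C where "C p = {f. (adj (fst p) (snd p) \<longleftrightarrow> adj (f (fst p)) (f (snd p)))
    \<and> (fst p \<noteq> snd p \<longrightarrow> f (fst p) \<noteq> f (snd p))}" for p :: "'v \<times> 'v"
  have "closedin pointwise_topology (C p)" for p
    by (rule closedin_pointwise_if_determined_on_finite[of "{fst p, snd p}"]) (auto simp: C_def)
  then have "closedin pointwise_topology (\<Inter>(range C))" by (intro closedin_Inter) auto
  moreover have "\<Inter>(range C) = Aut adj"
  proof (intro set_eqI iffI)
    fix f assume "f \<in> \<Inter>(range C)"
    then have "inj f" "\<And>x y. adj x y \<longleftrightarrow> adj (f x) (f y)"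
      unfolding C_def by (auto intro!: injI)
    then show "f \<in> Aut adj" unfolding Aut_def bij_def using surj_if_inj_adj_iff by blast
  qed (auto simp: C_def Aut_def bij_def dest: injD)
  ultimately show ?thesis by simp
qed

lemma local_perm_cong:
  assumes "\<forall>y\<in>insert x (nbr x ` \<Omega>). f y = f' y"
  shows "local_perm adj \<Omega> c f x = local_perm adj \<Omega> c f' x"
proof
  fix \<omega>
  show "local_perm adj \<Omega> c f x \<omega> = local_perm adj \<Omega> c f' x \<omega>"
    using assms by (cases "\<omega> \<in> \<Omega>") (simp_all add: local_perm_apply local_perm_outside)
qed

lemma local_perm_id: "local_perm adj \<Omega> c id x = id"
proof
  fix \<omega>
  show "local_perm adj \<Omega> c id x \<omega> = id \<omega>"
    by (cases "\<omega> \<in> \<Omega>") (simp_all add: local_perm_apply local_perm_outside color_nbr)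
qed

lemma local_perm_comp:
  assumes "u \<in> Aut adj"
  shows "local_perm adj \<Omega> c (h \<circ> u) x = local_perm adj \<Omega> c h (u x) \<circ> local_perm adj \<Omega> c u x"
proof
  fix \<omega>
  show "local_perm adj \<Omega> c (h \<circ> u) x \<omega> = (local_perm adj \<Omega> c h (u x) \<circ> local_perm adj \<Omega> c u x) \<omega>"
  proof (cases "\<omega> \<in> \<Omega>")
    case True
    have "adj (u x) (u (nbr x \<omega>))" using adj_nbr[OF True] assms unfolding Aut_def by blast
    then have "color (u x) (u (nbr x \<omega>)) \<in> \<Omega>" "nbr (u x) (color (u x) (u (nbr x \<omega>))) = u (nbr x \<omega>)"
      by (simp_all add: color_in nbr_color)
    then show ?thesis using True by (simp add: local_perm_apply)
  qed (simp add: local_perm_outside)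
qed

end

subsection \<open>Automorphisms with a prescribed singular set\<close>

locale intermediate_groups = colored_tree adj \<Omega> c
  for adj :: "'v \<Rightarrow> 'v \<Rightarrow> bool" and \<Omega> :: "'c set" and c +
  fixes F F' :: "('c \<Rightarrow> 'c) set"
  assumes perm_group_F: "perm_group \<Omega> F" and perm_group_F': "perm_group \<Omega> F'"
    and F_subset: "F \<subseteq> F'" and F'_subset_hat: "F' \<subseteq> hat \<Omega> F"
begin

abbreviation "UF \<equiv> U_grp adj \<Omega> c F"
abbreviation "GFF \<equiv> G2_grp adj \<Omega> c F F'"

lemma permutes_F: "p \<in> F \<Longrightarrow> p permutes \<Omega>"
  and permutes_F': "p \<in> F' \<Longrightarrow> p permutes \<Omega>"
  and id_in_F: "id \<in> F"
  and comp_in_F: "p \<in> F \<Longrightarrow> q \<in> F \<Longrightarrow> p \<circ> q \<in> F"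
  and comp_in_F': "p \<in> F' \<Longrightarrow> q \<in> F' \<Longrightarrow> p \<circ> q \<in> F'"
  and inv_in_F: "p \<in> F \<Longrightarrow> inv p \<in> F"
  using perm_group_F perm_group_F' unfolding perm_group_def by blast+

lemma F'_orbit:
  assumes "q \<in> F'" "\<omega> \<in> \<Omega>"
  shows "\<exists>f\<in>F. f \<omega> = q \<omega>"
proof -
  have "q \<omega> \<in> {f \<omega> |f. f \<in> F}" using F'_subset_hat assms unfolding hat_def by auto
  then show ?thesis by auto
qed

lemma comp_in_F_cancel_left:
  assumes "p \<in> F" "q permutes \<Omega>" "p \<circ> q \<in> F"
  shows "q \<in> F"
proof -
  have "inv p \<circ> (p \<circ> q) = q" using permutes_inv_o(2)[OF permutes_F[OF assms(1)]] by (simp add: o_assoc)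
  then show ?thesis using comp_in_F[OF inv_in_F[OF assms(1)] assms(3)] by simp
qed

lemma comp_in_F_cancel_right:
  assumes "p permutes \<Omega>" "q \<in> F" "p \<circ> q \<in> F"
  shows "p \<in> F"
proof -
  have "(p \<circ> q) \<circ> inv q = p" using permutes_inv_o(1)[OF permutes_F[OF assms(2)]] by (simp add: o_assoc[symmetric])
  then show ?thesis using comp_in_F[OF assms(3) inv_in_F[OF assms(2)]] by simp
qed

definition singular :: "('v \<Rightarrow> 'v) \<Rightarrow> 'v set" where
  "singular g = {v. local_perm adj \<Omega> c g v \<notin> F}"

lemma G2_grp_iff:
  "g \<in> GFF \<longleftrightarrow> g \<in> Aut adj \<and> finite (singular g) \<and> (\<forall>v. local_perm adj \<Omega> c g v \<in> F')"
  unfolding G2_grp_def G_grp_def U_grp_def singular_def by auto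

context
  fixes \<tau> assumes \<tau>: "\<tau> \<in> F'" "\<tau> \<notin> F"
begin

definition allowed :: "'v set \<Rightarrow> 'v \<Rightarrow> ('c \<Rightarrow> 'c) set" where
  "allowed S x = (if x \<in> S then F' - F else F)"

text \<open>The transposition is a junk default making the choice admissible; by
  \<open>allowed_realises\<close> it is never used along the construction.\<close>
definition choice :: "'v set \<Rightarrow> 'v \<Rightarrow> 'c \<Rightarrow> 'c \<Rightarrow> 'c \<Rightarrow> 'c" where
  "choice S x \<omega> a = (if \<exists>q\<in>allowed S x. q \<omega> = a
     then SOME q. q \<in> allowed S x \<and> q \<omega> = a else Transposition.transpose \<omega> a)"

definition root_perm :: "'v set \<Rightarrow> 'v \<Rightarrow> 'c \<Rightarrow> 'c" where
  "root_perm S r = (if r \<in> S then \<tau> else id)"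

abbreviation "aut_with_singular S r \<equiv> ext_map r (root_perm S r) (choice S)"

lemma admissible_extension_choice: "admissible_extension adj \<Omega> c (root_perm S r) (choice S)"
proof -
  have "choice S x \<omega> a permutes \<Omega> \<and> choice S x \<omega> a \<omega> = a"
    if \<omega>: "\<omega> \<in> \<Omega>" and a: "a \<in> \<Omega>" for x \<omega> a
  proof (cases "\<exists>q\<in>allowed S x. q \<omega> = a")
    case True
    then have "(SOME q. q \<in> allowed S x \<and> q \<omega> = a) \<in> allowed S x
        \<and> (SOME q. q \<in> allowed S x \<and> q \<omega> = a) \<omega> = a"
      by (metis (mono_tags, lifting) someI)
    moreover have "allowed S x \<subseteq> F'" unfolding allowed_def using F_subset by auto
    ultimately show ?thesis using True permutes_F' unfolding choice_def by auto
  next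
    case False
    then show ?thesis unfolding choice_def using permutes_swap_id[OF \<omega> a] by simp
  qed
  moreover have "root_perm S r permutes \<Omega>" unfolding root_perm_def using permutes_F'[OF \<tau>(1)] by simp
  ultimately show ?thesis
    unfolding admissible_extension_def admissible_extension_axioms_def admissible_def
    using colored_tree_axioms by blast
qed

text \<open>This is where \<open>F' \<le> \<hat>F\<close> enters: since \<open>F\<close> and \<open>F'\<close> have the same orbits, every value
  taken by an element of \<open>F'\<close> is taken by an element of \<open>F\<close> and by one of \<open>F \<circ> \<tau> \<subseteq> F' - F\<close>.\<close>
lemma allowed_realises: "q \<in> F' \<Longrightarrow> \<omega> \<in> \<Omega> \<Longrightarrow> \<exists>p\<in>allowed S x. p \<omega> = q \<omega>"
proof -
  assume q: "q \<in> F'" and \<omega>: "\<omega> \<in> \<Omega>"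
  obtain f2 where f2: "f2 \<in> F" "f2 \<omega> = q \<omega>" using F'_orbit[OF q \<omega>] by blast
  show ?thesis
  proof (cases "x \<in> S")
    case True
    obtain f1 where f1: "f1 \<in> F" "f1 \<omega> = \<tau> \<omega>" using F'_orbit[OF \<tau>(1) \<omega>] by blast
    define f where "f = f2 \<circ> inv f1"
    have fF: "f \<in> F" unfolding f_def using comp_in_F inv_in_F f1 f2 by blast
    have "inv f1 (\<tau> \<omega>) = \<omega>" using f1 permutes_inverses(2)[OF permutes_F[OF f1(1)]] by metis
    then have "(f \<circ> \<tau>) \<omega> = q \<omega>" unfolding f_def using f2 by simp
    moreover have "f \<circ> \<tau> \<in> F'" using fF F_subset comp_in_F'[OF _ \<tau>(1)] by blast
    moreover have "f \<circ> \<tau> \<notin> F" using comp_in_F_cancel_left[OF fF permutes_F'[OF \<tau>(1)]] \<tau>(2) by blast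
    ultimately show ?thesis unfolding allowed_def using True by (intro bexI[of _ "f \<circ> \<tau>"]) auto
  qed (use f2 allowed_def in auto)
qed

lemma ext_perm_choice:
  "ext_perm r (root_perm S r) (choice S) x \<in> F' \<and> (ext_perm r (root_perm S r) (choice S) x \<in> F \<longleftrightarrow> x \<notin> S)"
proof (induction x rule: parent_induct[where r=r])
  case root
  then show ?case using \<tau> id_in_F F_subset unfolding root_perm_def by (auto simp: ext_perm_root)
next
  case (step x)
  let ?s = "ext_perm r (root_perm S r) (choice S)"
  let ?\<omega> = "color x (parent r x)"
  have "?\<omega> \<in> \<Omega>" using parent(1)[OF step(1)] color_in by blast
  then have ex: "\<exists>q\<in>allowed S x. q ?\<omega> = ?s (parent r x) ?\<omega>"
    using allowed_realises step(2) by blast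
  then have "?s x \<in> allowed S x"
    using ext_perm_parent[OF step(1)] someI_ex[OF ex[unfolded Bex_def]] unfolding choice_def by simp
  then show ?case unfolding allowed_def using F_subset by (auto split: if_splits)
qed

lemma aut_with_singular_Aut: "aut_with_singular S r \<in> Aut adj"
  by (rule admissible_extension.ext_map_Aut[OF admissible_extension_choice])

lemma singular_aut_with_singular: "singular (aut_with_singular S r) = S"
  unfolding singular_def admissible_extension.local_perm_ext_map[OF admissible_extension_choice] using ext_perm_choice by auto

lemma aut_with_singular_in_G2: "finite S \<Longrightarrow> aut_with_singular S r \<in> GFF"
  unfolding G2_grp_iff singular_aut_with_singular admissible_extension.local_perm_ext_map[OF admissible_extension_choice]
  using aut_with_singular_Aut ext_perm_choice by auto

lemma aut_with_singular_local:
  assumes "\<And>y. tdist r y \<le> n \<Longrightarrow> y \<in> S \<longleftrightarrow> y \<in> S'" "tdist r x \<le> n"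
  shows "aut_with_singular S r x = aut_with_singular S' r x"
proof -
  have "root_perm S r = root_perm S' r" unfolding root_perm_def using assms(1)[of r] by simp
  moreover have "choice S y = choice S' y" if "tdist r y \<le> n" for y
    using assms(1)[OF that] unfolding choice_def allowed_def by simp
  ultimately show ?thesis using ext_eq_if_local_eq[OF _ assms(2)] by metis
qed

end

end

subsection \<open>Closedness and compactness\<close>

lemma bij_vimage_subset_iff:
  assumes "bij f"
  shows "f -` S \<subseteq> B \<longleftrightarrow> S \<subseteq> f ` B"
proof
  assume "f -` S \<subseteq> B"
  then have "f ` (f -` S) \<subseteq> f ` B" by (rule image_mono)
  then show "S \<subseteq> f ` B" using assms by (simp add: bij_is_surj surj_image_vimage_eq)
next
  assume "S \<subseteq> f ` B"
  then have "f -` S \<subseteq> f -` (f ` B)" by (rule vimage_mono)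
  then show "f -` S \<subseteq> B" using assms by (simp add: bij_is_inj inj_vimage_image_eq)
qed

context intermediate_groups
begin

lemma U_subset_Aut: "UF \<subseteq> Aut adj"
  unfolding U_grp_def by auto

lemma id_in_U: "id \<in> UF"
  unfolding U_grp_def using id_in_Aut local_perm_id id_in_F by simp

lemma G2_eq_U_if_eq: "F = F' \<Longrightarrow> GFF = UF"
  unfolding G2_grp_def G_grp_def U_grp_def by auto

lemma closedin_U: "closedin pointwise_topology UF"
proof -
  have "closedin pointwise_topology {f. local_perm adj \<Omega> c f x \<in> F}" for x
  proof (rule closedin_pointwise_if_determined_on_finite[of "insert x (nbr x ` \<Omega>)"])
    fix f f' assume "\<forall>y\<in>insert x (nbr x ` \<Omega>). f y = f' y" "f \<in> {f. local_perm adj \<Omega> c f x \<in> F}"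
    then show "f' \<in> {f. local_perm adj \<Omega> c f x \<in> F}" using local_perm_cong[of x f f'] by simp
  qed (simp add: finite_colors)
  then have "closedin pointwise_topology (\<Inter>x. {f. local_perm adj \<Omega> c f x \<in> F})"
    by (intro closedin_Inter) auto
  moreover have "UF = Aut adj \<inter> (\<Inter>x. {f. local_perm adj \<Omega> c f x \<in> F})"
    unfolding U_grp_def by auto
  ultimately show ?thesis using closedin_Aut by (simp add: closedin_Int)
qed

lemma closedin_aut_top_U: "closedin (aut_top adj) UF"
  unfolding aut_top_def closedin_subtopology using closedin_U U_subset_Aut by blast

lemma G2_comp_U:
  assumes h: "h \<in> GFF" and u: "u \<in> UF"
  shows "h \<circ> u \<in> GFF \<and> singular (h \<circ> u) = u -` singular h"
proof -
  have uA: "u \<in> Aut adj" using u U_subset_Aut by blast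
  have lpu: "local_perm adj \<Omega> c u x \<in> F" for x using u unfolding U_grp_def by simp
  have lph: "local_perm adj \<Omega> c h x \<in> F'" for x using h unfolding G2_grp_iff by simp
  have "local_perm adj \<Omega> c (h \<circ> u) x \<in> F \<longleftrightarrow> local_perm adj \<Omega> c h (u x) \<in> F" for x
    using local_perm_comp[OF uA, of h x] comp_in_F[OF _ lpu]
      comp_in_F_cancel_right[OF permutes_F'[OF lph] lpu] by auto
  then have sing: "singular (h \<circ> u) = u -` singular h" unfolding singular_def by auto
  have "inj u" using uA unfolding Aut_def bij_def by blast
  then have "finite (singular (h \<circ> u))" using h sing finite_vimageI unfolding G2_grp_iff by metis
  moreover have "local_perm adj \<Omega> c (h \<circ> u) x \<in> F'" for x
    using local_perm_comp[OF uA, of h x] comp_in_F'[OF lph] lpu F_subset by auto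
  moreover have "h \<circ> u \<in> Aut adj" using comp_in_Aut h uA unfolding G2_grp_iff by blast
  ultimately show ?thesis using sing unfolding G2_grp_iff by simp
qed

lemma openin_G2_top:
  "openin (G2_top adj \<Omega> c F F') W \<longleftrightarrow>
     W \<subseteq> GFF \<and> (\<forall>g\<in>GFF. openin (subtopology (aut_top adj) UF) {u \<in> UF. g \<circ> u \<in> W})"
proof -
  define P where "P W \<longleftrightarrow> W \<subseteq> GFF
    \<and> (\<forall>g\<in>GFF. openin (subtopology (aut_top adj) UF) {u \<in> UF. g \<circ> u \<in> W})" for W
  have "istopology P"
    unfolding istopology_def
  proof (intro conjI allI impI)
    fix S T assume "P S" "P T"
    moreover have "{u \<in> UF. g \<circ> u \<in> S \<inter> T} = {u \<in> UF. g \<circ> u \<in> S} \<inter> {u \<in> UF. g \<circ> u \<in> T}" for g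
      by auto
    ultimately show "P (S \<inter> T)" unfolding P_def by (auto simp: openin_Int)
  next
    fix K assume K: "\<forall>W\<in>K. P W"
    have "{u \<in> UF. g \<circ> u \<in> \<Union>K} = \<Union>((\<lambda>W. {u \<in> UF. g \<circ> u \<in> W}) ` K)" for g by auto
    then show "P (\<Union>K)" using K unfolding P_def by (auto intro!: openin_Union)
  qed
  moreover have "G2_top adj \<Omega> c F F' = topology P" unfolding G2_top_def P_def by simp
  ultimately show ?thesis by (simp add: P_def)
qed

lemma topspace_G2_top: "topspace (G2_top adj \<Omega> c F F') = GFF"
proof -
  have eq: "{u \<in> UF. g \<circ> u \<in> GFF} = topspace (subtopology (aut_top adj) UF)" if "g \<in> GFF" for g
    using G2_comp_U[OF that] U_subset_Aut unfolding aut_top_def by auto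
  have "openin (subtopology (aut_top adj) UF) {u \<in> UF. g \<circ> u \<in> GFF}" if "g \<in> GFF" for g
    unfolding eq[OF that] by (rule openin_topspace)
  then have "openin (G2_top adj \<Omega> c F F') GFF" unfolding openin_G2_top by blast
  then show ?thesis using openin_subset openin_G2_top by blast
qed

lemma G2_not_closed:
  assumes "F \<noteq> F'"
  shows "\<not> closedin (aut_top adj) GFF"
proof
  assume closed: "closedin (aut_top adj) GFF"
  obtain \<tau> where \<tau>: "\<tau> \<in> F'" "\<tau> \<notin> F" using assms F_subset by blast
  fix r :: 'v
  let ?g = "aut_with_singular \<tau> UNIV r"
  have "?g \<notin> GFF"
    using singular_aut_with_singular[OF \<tau>] infinite_vertices unfolding G2_grp_iff by simp
  moreover have "openin (aut_top adj) (Aut adj - GFF)"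
    using closed unfolding closedin_def aut_top_def by simp
  then obtain T where T: "openin pointwise_topology T" "Aut adj - GFF = T \<inter> Aut adj"
    unfolding aut_top_def openin_subtopology by blast
  ultimately have "?g \<in> T" using aut_with_singular_Aut[OF \<tau>] by blast
  then obtain A where A: "finite A" "\<And>f. \<forall>y\<in>A. ?g y = f y \<Longrightarrow> f \<in> T"
    using openin_pointwise_determined_on_finite[OF T(1)] by metis
  define n where "n = Max (insert 0 (tdist r ` A))"
  have "\<forall>y\<in>A. tdist r y \<le> n" unfolding n_def using A(1) by simp
  then have "\<forall>y\<in>A. ?g y = aut_with_singular \<tau> {y. tdist r y \<le> n} r y"
    using aut_with_singular_local[OF \<tau>, where n = n] by simp
  then have "aut_with_singular \<tau> {y. tdist r y \<le> n} r \<in> T" using A(2) by blast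
  moreover have "aut_with_singular \<tau> {y. tdist r y \<le> n} r \<in> GFF"
    using aut_with_singular_in_G2[OF \<tau>] finite_tdist_ball by blast
  ultimately show False using T(2) G2_grp_iff by blast
qed

lemma openin_G2_top_singular_within:
  "openin (G2_top adj \<Omega> c F F') {g \<in> GFF. singular g \<subseteq> {y. tdist r y \<le> k}}"
  unfolding openin_G2_top
proof (intro conjI ballI)
  fix h assume h: "h \<in> GFF"
  have "h \<circ> u \<in> {g \<in> GFF. singular g \<subseteq> {y. tdist r y \<le> k}} \<longleftrightarrow>
      singular h \<subseteq> u ` {y. tdist r y \<le> k}" if "u \<in> UF" for u
  proof -
    have "bij u" using that U_subset_Aut unfolding Aut_def by blast
    then show ?thesis using G2_comp_U[OF h that] bij_vimage_subset_iff by simp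
  qed
  then have "{u \<in> UF. h \<circ> u \<in> {g \<in> GFF. singular g \<subseteq> {y. tdist r y \<le> k}}}
      = ({f. singular h \<subseteq> f ` {y. tdist r y \<le> k}} \<inter> Aut adj) \<inter> UF"
    using U_subset_Aut by auto
  moreover have "openin (aut_top adj) ({f. singular h \<subseteq> f ` {y. tdist r y \<le> k}} \<inter> Aut adj)"
    unfolding aut_top_def openin_subtopology
    using openin_pointwise_cover_image[OF finite_tdist_ball] by blast
  ultimately show "openin (subtopology (aut_top adj) UF)
      {u \<in> UF. h \<circ> u \<in> {g \<in> GFF. singular g \<subseteq> {y. tdist r y \<le> k}}}"
    unfolding openin_subtopology by blast
qed auto

text \<open>The stabilizer is covered by the open sets of elements whose singular vertices lie within
  distance \<open>k\<close> of \<open>r\<close>, yet contains elements singular exactly at an arbitrarily distant vertex.\<close>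
lemma stabilizer_not_compact:
  assumes "F \<noteq> F'"
  shows "\<not> compactin (G2_top adj \<Omega> c F F') {g \<in> GFF. g r = r}"
proof
  assume compact: "compactin (G2_top adj \<Omega> c F F') {g \<in> GFF. g r = r}"
  obtain \<tau> where \<tau>: "\<tau> \<in> F'" "\<tau> \<notin> F" using assms F_subset by blast
  define W where "W k = {g \<in> GFF. singular g \<subseteq> {y. tdist r y \<le> k}}" for k
  have "{g \<in> GFF. g r = r} \<subseteq> \<Union>(range W)"
  proof
    fix g assume g: "g \<in> {g \<in> GFF. g r = r}"
    then have "finite (singular g)" unfolding G2_grp_iff by simp
    then have "singular g \<subseteq> {y. tdist r y \<le> Max (insert 0 (tdist r ` singular g))}" by auto
    then show "g \<in> \<Union>(range W)" using g unfolding W_def by blast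
  qed
  moreover have "\<forall>V\<in>range W. openin (G2_top adj \<Omega> c F F') V"
    using openin_G2_top_singular_within unfolding W_def by blast
  ultimately obtain \<F> where \<F>: "finite \<F>" "\<F> \<subseteq> range W" "{g \<in> GFF. g r = r} \<subseteq> \<Union>\<F>"
    using compact unfolding compactin_def by meson
  then obtain C where C: "finite C" "\<F> = W ` C" by (metis finite_subset_image)
  define K where "K = Max (insert 0 C)"
  have "W k \<subseteq> W K" if "k \<in> C" for k
  proof -
    have "k \<le> K" unfolding K_def using C(1) that by simp
    then show ?thesis unfolding W_def by auto
  qed
  then have "{g \<in> GFF. g r = r} \<subseteq> W K" using \<F>(3) C(2) by blast
  moreover obtain x where x: "tdist r x = Suc K" using ex_tdist_eq by blast
  moreover have "aut_with_singular \<tau> {x} r \<in> {g \<in> GFF. g r = r}"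
    using aut_with_singular_in_G2[OF \<tau>] ext_map_root by simp
  ultimately show False using singular_aut_with_singular[OF \<tau>] unfolding W_def by auto
qed

lemma compactin_U_stabilizer: "compactin pointwise_topology {g \<in> UF. g v = v}"
proof (rule closed_compactin)
  define B where "B x = {y. tdist v y \<le> tdist v x}" for x
  show "compactin pointwise_topology (Pi\<^sub>E UNIV B)"
    unfolding compactin_PiE compactin_discrete_topology B_def using finite_tdist_ball by simp
  show "{g \<in> UF. g v = v} \<subseteq> Pi\<^sub>E UNIV B"
    using tdist_Aut_le U_subset_Aut unfolding B_def by (auto simp: PiE_iff)
  have "closedin pointwise_topology {g. g v = v}"
    by (rule closedin_pointwise_if_determined_on_finite[of "{v}"]) auto
  then show "closedin pointwise_topology {g \<in> UF. g v = v}"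
    using closedin_U closedin_Int by (simp add: Collect_conj_eq)
qed

lemma compactin_G2_stabilizer:
  assumes eq: "GFF = UF"
  shows "compactin (G2_top adj \<Omega> c F F') {g \<in> GFF. g v = v}"
proof -
  have "continuous_map (subtopology (aut_top adj) UF) (G2_top adj \<Omega> c F F') id"
    unfolding continuous_map_def
  proof (intro conjI allI impI)
    show "id \<in> topspace (subtopology (aut_top adj) UF) \<rightarrow> topspace (G2_top adj \<Omega> c F F')"
      using topspace_G2_top eq by auto
    fix W assume "openin (G2_top adj \<Omega> c F F') W"
    then have "openin (subtopology (aut_top adj) UF) {u \<in> UF. id \<circ> u \<in> W}"
      using id_in_U eq unfolding openin_G2_top by blast
    moreover have "{x \<in> topspace (subtopology (aut_top adj) UF). id x \<in> W} = {u \<in> UF. id \<circ> u \<in> W}"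
      using U_subset_Aut unfolding aut_top_def by auto
    ultimately show "openin (subtopology (aut_top adj) UF) {x \<in> topspace (subtopology (aut_top adj) UF). id x \<in> W}"
      by simp
  qed
  moreover have "compactin (subtopology (aut_top adj) UF) {g \<in> UF. g v = v}"
    unfolding compactin_subtopology aut_top_def using compactin_U_stabilizer U_subset_Aut by auto
  ultimately have "compactin (G2_top adj \<Omega> c F F') (id ` {g \<in> UF. g v = v})"
    by (rule image_compactin[rotated])
  then show ?thesis using eq by simp
qed

end

theorem mainTheorem15:
  fixes adj :: "'v \<Rightarrow> 'v \<Rightarrow> bool" and \<Omega> :: "'c set" and c :: "'v set \<Rightarrow> 'c"
    and F F' :: "('c \<Rightarrow> 'c) set"
  assumes "finite \<Omega>" and "card \<Omega> \<ge> 3"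
    and "regular_tree adj (card \<Omega>)"
    and "legal_coloring adj \<Omega> c"
    and "perm_group \<Omega> F" and "perm_group \<Omega> F'"
    and "F \<subseteq> F'" and "F' \<subseteq> hat \<Omega> F"
  shows "(F = F' \<longleftrightarrow> G2_grp adj \<Omega> c F F' = U_grp adj \<Omega> c F)
       \<and> (G2_grp adj \<Omega> c F F' = U_grp adj \<Omega> c F \<longleftrightarrow> closedin (aut_top adj) (G2_grp adj \<Omega> c F F'))
       \<and> (closedin (aut_top adj) (G2_grp adj \<Omega> c F F') \<longleftrightarrow>
            (\<forall>v. compactin (G2_top adj \<Omega> c F F') {g \<in> G2_grp adj \<Omega> c F F'. g v = v}))"
proof -
  interpret intermediate_groups adj \<Omega> c F F'
    by unfold_locales (use assms in auto)
  show ?thesis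
  proof (cases "F = F'")
    case True
    then have eq: "G2_grp adj \<Omega> c F F' = U_grp adj \<Omega> c F" by (rule G2_eq_U_if_eq)
    then have "closedin (aut_top adj) (G2_grp adj \<Omega> c F F')" using closedin_aut_top_U by simp
    then show ?thesis using True eq compactin_G2_stabilizer[OF eq] by blast
  next
    case False
    then have "\<not> closedin (aut_top adj) (G2_grp adj \<Omega> c F F')" by (rule G2_not_closed)
    moreover have "\<not> compactin (G2_top adj \<Omega> c F F') {g \<in> G2_grp adj \<Omega> c F F'. g undefined = undefined}"
      using False by (rule stabilizer_not_compact)
    ultimately show ?thesis using False closedin_aut_top_U by auto
  qed
qed

end
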